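(* Fix $\gamma\in(0,1]$ and $0<\alpha<0.25$, and let $\xi>0$ be arbitrarily small. There exist $C>0$ and $N_0$ such that for all $N\ge N_0$, $$-\frac1N\sum_{i=1}^b\big[(J^T(s^* ))^{-1}\big]_{ii}\,\tilde f_i(s^* )\le\frac{C}{N^{1-2\alpha-3\xi}}.$$
   Context: Let $N\ge1$, $\lambda=1-\gamma/N^\alpha$, and $b=b(N)\ge1$ an integer with $b=O(\log N)$. The mean-field vector field is $f_k(s)=\lambda(s_{k-1}^2-s_k^2)-(s_k-s_{k+1})$, $k=1,\dots,b$, with $s_0=1,s_{b+1}=0$; $s^*$ is its unique equilibrium in $\{s\in\mathbb R^b:1\ge s_1\ge\cdots\ge s_b\ge0\}$. $J(s^* )$ is the $b\times b$ tridiagonal Jacobian of $f$ at $s^*$ with $J_{kk}=-2\lambda s^*_k-1$, $J_{k,k+1}=1$, $J_{k+1,k}=2\lambda s^*_k$. $\tilde f_i(s)=\frac12[\lambda(s_{i-1}^2-s_i^2)+(s_i-s_{i+1})]$. (In the paper $[(J^T(s^* ))^{-1}]_{ii}=\nabla^2g(s)_{ii}$ for the solution $g$ of $\nabla g(s)\cdot J(s^* )(s-s^* )=\|s-s^*\|^2$, and the lemma is stated for $s$ with $\|s-s^*\|^{2r}\le N^{-\epsilon}$; the quantity does not depend on $s$.) *)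

theory Defs
  imports Complex_Main "HOL-Library.Landau_Symbols" "Jordan_Normal_Form.Matrix"
begin

text \<open>Vectors s = (s_1,...,s_b) are represented as functions nat => real,
  with the boundary conventions s_0 = 1, s_(b+1) = 0 (and s_k = 0 for k > b+1).\<close>

definition lam :: "real \<Rightarrow> real \<Rightarrow> nat \<Rightarrow> real" where
  "lam \<gamma> \<alpha> N = 1 - \<gamma> / (real N) powr \<alpha>"

definition fmf :: "real \<Rightarrow> (nat \<Rightarrow> real) \<Rightarrow> nat \<Rightarrow> real" where
  "fmf l s k = l * ((s (k - 1))\<^sup>2 - (s k)\<^sup>2) - (s k - s (k + 1))"

definition ftil :: "real \<Rightarrow> (nat \<Rightarrow> real) \<Rightarrow> nat \<Rightarrow> real" where
  "ftil l s i = (l * ((s (i - 1))\<^sup>2 - (s i)\<^sup>2) + (s i - s (i + 1))) / 2"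

definition admissible :: "nat \<Rightarrow> (nat \<Rightarrow> real) \<Rightarrow> bool" where
  "admissible b s \<longleftrightarrow> s 0 = 1 \<and> (\<forall>k>b. s k = 0) \<and>
     (\<forall>k\<in>{1..b}. 0 \<le> s k \<and> s k \<le> s (k - 1))"

definition sstar :: "real \<Rightarrow> nat \<Rightarrow> nat \<Rightarrow> real" where
  "sstar l b = (THE s. admissible b s \<and> (\<forall>k\<in>{1..b}. fmf l s k = 0))"

text \<open>Jacobian J(s*) as a b x b matrix; row/column index i (0-based) corresponds to k = i+1.
  J_kk = -2 lambda s_k - 1, J_(k,k+1) = 1, J_(k+1,k) = 2 lambda s_k.\<close>
definition jac :: "real \<Rightarrow> nat \<Rightarrow> (nat \<Rightarrow> real) \<Rightarrow> real mat" where
  "jac l b s = mat b b (\<lambda>(i, j).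
      if j = i then - 2 * l * s (i + 1) - 1
      else if j = i + 1 then 1
      else if i = j + 1 then 2 * l * s (j + 1)
      else 0)"

definition matinv :: "real mat \<Rightarrow> real mat" where
  "matinv A = (THE B. B \<in> carrier_mat (dim_row A) (dim_row A) \<and>
       A * B = 1\<^sub>m (dim_row A) \<and> B * A = 1\<^sub>m (dim_row A))"

end

theory Submission
  imports Defs "Jordan_Normal_Form.Determinant"
begin

text \<open>
  Since f_k(s) = (lambda s_(k-1)^2 - s_k) - (lambda s_k^2 - s_(k+1)), the equilibrium equations
  say that lambda s_(k-1)^2 - s_k does not depend on k. Hence s* is the orbit s_0 = 1,
  s_k = lambda (s_(k-1)^2 - x^2) of its last coordinate x = s_b, and this orbit decays doubly
  exponentially: lambda s_k <= lambda^(2^k).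

  The i-th column x of (J^T)^(-1) solves x_(k-1) - x_k + a_k (x_(k+1) - x_k) = [k = i] with
  a_k = 2 lambda s_k > 0 and x_0 = x_(b+1) = 0. Its first integral
  a_1...a_k (x_k - x_(k+1)) = (x_0 - x_1) - [i <= k] a_1...a_(i-1), together with the vanishing
  sum of all increments, gives 0 <= -x_i <= sum_(k<i) a_(k+1)...a_(i-1). By the decay each of
  these products is at most 2^q lambda^(2^q) <= 1/(1 - lambda), so
  -[(J^T)^(-1)]_ii <= b/(1 - lambda) = b N^alpha/gamma. At the equilibrium
  ftil_i(s*) = s_i - s_(i+1) >= 0, which telescopes to at most 1, and the factor b = O(log N)
  is absorbed by N^xi.
\<close>

section \<open>Second-order difference equations with positive coefficients\<close>

lemma difference_eq_first_integral:
  fixes a x :: "nat \<Rightarrow> real"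
  assumes rows: "\<forall>k\<in>{1..n}. x (k - 1) - x k + a k * (x (k + 1) - x k) = (if k = i then c else 0)"
    and "k \<le> n"
  shows "(\<Prod>m\<in>{1..k}. a m) * (x k - x (Suc k))
    = x 0 - x 1 - (if 1 \<le> i \<and> i \<le> k then c * (\<Prod>m\<in>{1..i - 1}. a m) else 0)"
  using \<open>k \<le> n\<close>
proof (induction k)
  case 0
  then show ?case by simp
next
  case (Suc k)
  have row: "a (Suc k) * (x (Suc k) - x (Suc (Suc k))) = x k - x (Suc k) - (if Suc k = i then c else 0)"
    using rows Suc.prems by (auto simp: algebra_simps dest!: bspec[of _ _ "Suc k"])
  have "(\<Prod>m\<in>{1..Suc k}. a m) * (x (Suc k) - x (Suc (Suc k)))
      = (\<Prod>m\<in>{1..k}. a m) * (a (Suc k) * (x (Suc k) - x (Suc (Suc k))))"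
    by (simp add: prod.nat_ivl_Suc')
  also have "\<dots> = (\<Prod>m\<in>{1..k}. a m) * (x k - x (Suc k))
      - (if Suc k = i then c * (\<Prod>m\<in>{1..k}. a m) else 0)"
    unfolding row by (simp add: right_diff_distrib)
  also have "\<dots> = x 0 - x 1 - (if 1 \<le> i \<and> i \<le> Suc k then c * (\<Prod>m\<in>{1..i - 1}. a m) else 0)"
  proof -
    have IH: "(\<Prod>m\<in>{1..k}. a m) * (x k - x (Suc k))
        = x 0 - x 1 - (if 1 \<le> i \<and> i \<le> k then c * (\<Prod>m\<in>{1..i - 1}. a m) else 0)"
      using Suc by simp
    show ?thesis
    proof (cases "Suc k = i")
      case True
      then show ?thesis unfolding IH True[symmetric] by simp
    next
      case False
      then have "i \<le> Suc k \<longleftrightarrow> i \<le> k" by linarith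
      with False show ?thesis unfolding IH by simp
    qed
  qed
  finally show ?case .
qed

lemma difference_eq_increment:
  fixes a x :: "nat \<Rightarrow> real"
  assumes apos: "\<forall>k\<in>{1..n}. 0 < a k"
    and rows: "\<forall>k\<in>{1..n}. x (k - 1) - x k + a k * (x (k + 1) - x k) = (if k = i then c else 0)"
    and "k \<le> n"
  shows "x k - x (Suc k)
    = (x 0 - x 1 - (if 1 \<le> i \<and> i \<le> k then c * (\<Prod>m\<in>{1..i - 1}. a m) else 0))
      / (\<Prod>m\<in>{1..k}. a m)"
proof -
  have "0 < (\<Prod>m\<in>{1..k}. a m)"
    using apos \<open>k \<le> n\<close> by (intro prod_pos) auto
  then show ?thesis
    using difference_eq_first_integral[OF rows \<open>k \<le> n\<close>]
    by (metis less_irrefl nonzero_mult_div_cancel_left)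
qed

lemma difference_eq_initial_increment_bounds:
  fixes a x :: "nat \<Rightarrow> real"
  assumes apos: "\<forall>k\<in>{1..n}. 0 < a k"
    and rows: "\<forall>k\<in>{1..n}. x (k - 1) - x k + a k * (x (k + 1) - x k) = (if k = i then c else 0)"
    and "x 0 = 0" "x (Suc n) = 0" "1 \<le> i" "i \<le> n" "0 \<le> c"
  shows "0 \<le> x 0 - x 1" "x 0 - x 1 \<le> c * (\<Prod>m\<in>{1..i - 1}. a m)"
proof -
  define d where "d = x 0 - x 1"
  define Q where "Q = c * (\<Prod>m\<in>{1..i - 1}. a m)"
  have "\<forall>m\<in>{1..i - 1}. 0 \<le> a m"
    using apos \<open>i \<le> n\<close> by force
  then have "0 \<le> Q"
    unfolding Q_def using \<open>0 \<le> c\<close> by (intro mult_nonneg_nonneg prod_nonneg) auto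
  have incr: "x k - x (Suc k) = (d - (if i \<le> k then Q else 0)) / (\<Prod>m\<in>{1..k}. a m)"
    if "k \<le> n" for k
    using difference_eq_increment[OF apos rows that] \<open>1 \<le> i\<close>
    unfolding d_def[symmetric] Q_def[symmetric] by simp
  have P: "0 < (\<Prod>m\<in>{1..k}. a m)" if "k \<le> n" for k
    using apos that by (intro prod_pos) auto
  \<comment> \<open>if \<open>d < 0\<close> all increments are negative, if \<open>d > Q\<close> all are positive, yet they sum to zero\<close>
  have sum0: "(\<Sum>k<Suc n. x k - x (Suc k)) = 0"
    using sum_lessThan_telescope'[of x "Suc n"] \<open>x 0 = 0\<close> \<open>x (Suc n) = 0\<close> by simp
  show "0 \<le> x 0 - x 1"
  proof (rule ccontr)
    assume "\<not> 0 \<le> x 0 - x 1"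
    then have "d < 0" by (simp add: d_def)
    then have "(\<Sum>k<Suc n. x k - x (Suc k)) < (\<Sum>k<Suc n. 0)"
      using incr P \<open>0 \<le> Q\<close> by (intro sum_strict_mono) (auto intro!: divide_neg_pos)
    with sum0 show False by simp
  qed
  show "x 0 - x 1 \<le> c * (\<Prod>m\<in>{1..i - 1}. a m)"
  proof (rule ccontr)
    assume "\<not> x 0 - x 1 \<le> c * (\<Prod>m\<in>{1..i - 1}. a m)"
    then have "Q < d" by (simp add: d_def Q_def)
    then have "(\<Sum>k<Suc n. 0) < (\<Sum>k<Suc n. x k - x (Suc k))"
      using incr P \<open>0 \<le> Q\<close> by (intro sum_strict_mono) (auto intro!: divide_pos_pos)
    with sum0 show False by simp
  qed
qed

lemma difference_eq_solution_bounds: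
  fixes a x :: "nat \<Rightarrow> real"
  assumes apos: "\<forall>k\<in>{1..n}. 0 < a k"
    and rows: "\<forall>k\<in>{1..n}. x (k - 1) - x k + a k * (x (k + 1) - x k) = (if k = i then c else 0)"
    and "x 0 = 0" "x (Suc n) = 0" "1 \<le> i" "i \<le> n" "0 \<le> c"
  shows "0 \<le> - x i" "- x i \<le> c * (\<Sum>k<i. \<Prod>m\<in>{Suc k..i - 1}. a m)"
proof -
  define d where "d = x 0 - x 1"
  have d: "0 \<le> d" "d \<le> c * (\<Prod>m\<in>{1..i - 1}. a m)"
    using difference_eq_initial_increment_bounds[OF assms] by (simp_all add: d_def)
  have P: "0 < (\<Prod>m\<in>{1..k}. a m)" if "k < i" for k
    using apos that \<open>i \<le> n\<close> by (intro prod_pos) auto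
  have "- x i = (\<Sum>k<i. x k - x (Suc k))"
    using sum_lessThan_telescope'[of x i] \<open>x 0 = 0\<close> by simp
  also have "\<dots> = (\<Sum>k<i. d / (\<Prod>m\<in>{1..k}. a m))"
  proof (rule sum.cong)
    fix k assume "k \<in> {..<i}"
    then show "x k - x (Suc k) = d / (\<Prod>m\<in>{1..k}. a m)"
      using difference_eq_increment[OF apos rows, of k] \<open>i \<le> n\<close>
      unfolding d_def[symmetric] by simp
  qed simp
  finally have xi: "- x i = (\<Sum>k<i. d / (\<Prod>m\<in>{1..k}. a m))" .
  then show "0 \<le> - x i"
    using d P by (auto intro!: sum_nonneg divide_nonneg_pos)
  have "(\<Sum>k<i. d / (\<Prod>m\<in>{1..k}. a m)) \<le> (\<Sum>k<i. c * (\<Prod>m\<in>{Suc k..i - 1}. a m))"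
  proof (rule sum_mono)
    fix k assume "k \<in> {..<i}"
    then have "k < i" by simp
    have "{1..i - 1} = {1..k} \<union> {Suc k..i - 1}" "{1..k} \<inter> {Suc k..i - 1} = {}"
      using \<open>k < i\<close> by auto
    then have split: "c * (\<Prod>m\<in>{1..i - 1}. a m)
        = (\<Prod>m\<in>{1..k}. a m) * (c * (\<Prod>m\<in>{Suc k..i - 1}. a m))"
      by (metis finite_atLeastAtMost mult.left_commute prod.union_disjoint)
    have "d / (\<Prod>m\<in>{1..k}. a m) \<le> c * (\<Prod>m\<in>{1..i - 1}. a m) / (\<Prod>m\<in>{1..k}. a m)"
      using d P[OF \<open>k < i\<close>] by (intro divide_right_mono) auto
    also have "\<dots> = c * (\<Prod>m\<in>{Suc k..i - 1}. a m)"
      unfolding split using P[OF \<open>k < i\<close>] by (metis less_irrefl nonzero_mult_div_cancel_left)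
    finally show "d / (\<Prod>m\<in>{1..k}. a m) \<le> c * (\<Prod>m\<in>{Suc k..i - 1}. a m)" .
  qed
  also have "\<dots> = c * (\<Sum>k<i. \<Prod>m\<in>{Suc k..i - 1}. a m)"
    by (rule sum_distrib_left[symmetric])
  finally show "- x i \<le> c * (\<Sum>k<i. \<Prod>m\<in>{Suc k..i - 1}. a m)"
    using xi by simp
qed

lemma difference_eq_homogeneous:
  fixes a x :: "nat \<Rightarrow> real"
  assumes apos: "\<forall>k\<in>{1..n}. 0 < a k"
    and rows: "\<forall>k\<in>{1..n}. x (k - 1) - x k + a k * (x (k + 1) - x k) = 0"
    and "x 0 = 0" "x (Suc n) = 0" "k \<le> n"
  shows "x k = 0"
proof (cases "k = 0")
  case False
  have "\<forall>j\<in>{1..n}. x (j - 1) - x j + a j * (x (j + 1) - x j) = (if j = k then 0 else 0)"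
    using rows by simp
  from difference_eq_solution_bounds[OF apos this \<open>x 0 = 0\<close> \<open>x (Suc n) = 0\<close> _ \<open>k \<le> n\<close>]
  show ?thesis
    using False by simp
qed (simp add: \<open>x 0 = 0\<close>)

section \<open>The equilibrium\<close>

lemma admissible_nonneg:
  assumes "admissible b s" "k \<le> b"
  shows "0 \<le> s k"
proof (cases k)
  case (Suc j)
  with assms have "k \<in> {1..b}" by simp
  with assms(1) show ?thesis unfolding admissible_def by blast
qed (use assms(1) in \<open>simp add: admissible_def\<close>)

lemma admissible_antimono:
  assumes "admissible b s" "j \<le> k" "k \<le> b"
  shows "s k \<le> s j"
  using assms(2,3)
proof (induction k rule: dec_induct)
  case (step n)
  then have "Suc n \<in> {1..b}" by simp
  with assms(1) have "s (Suc n) \<le> s (Suc n - 1)"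
    unfolding admissible_def by blast
  with step show ?case by simp
qed simp

fun profile :: "real \<Rightarrow> real \<Rightarrow> nat \<Rightarrow> real" where
  "profile l x 0 = 1"
| "profile l x (Suc j) = l * ((profile l x j)\<^sup>2 - x\<^sup>2)"

lemma profile_zero_pos: "0 < l \<Longrightarrow> 0 < profile l 0 j"
  by (induction j) auto

lemma isCont_profile: "isCont (\<lambda>x. profile l x j) x"
  by (induction j) (auto intro!: continuous_intros)

lemma profile_bounds:
  fixes l x :: real
  assumes "0 \<le> l" "l \<le> 1" "0 \<le> x" "x \<le> 1"
  shows "- x \<le> profile l x j \<and> profile l x j \<le> 1"
proof (induction j)
  case 0
  then show ?case using assms by simp
next
  case (Suc j)
  let ?p = "profile l x j"
  have "?p\<^sup>2 \<le> 1" using Suc assms by (auto simp: abs_square_le_1 abs_le_iff)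
  then have "?p\<^sup>2 - x\<^sup>2 \<le> 1"
    using zero_le_power2[of x] by linarith
  then have "l * (?p\<^sup>2 - x\<^sup>2) \<le> l * 1"
    using assms by (intro mult_left_mono) auto
  moreover have "l * x\<^sup>2 \<le> x"
  proof -
    have "l * x\<^sup>2 \<le> 1 * x\<^sup>2" using assms by (intro mult_right_mono) auto
    also have "\<dots> \<le> x" using assms by (simp add: power2_eq_square mult_left_le)
    finally show ?thesis .
  qed
  moreover have "0 \<le> l * ?p\<^sup>2" using assms by simp
  ultimately show ?case
    using \<open>l \<le> 1\<close> by (simp only: profile.simps right_diff_distrib) linarith
qed

lemma profile_decreasing:
  fixes l x :: real
  assumes "0 \<le> l" "l \<le> 1" "0 \<le> x" "x \<le> 1" "0 \<le> profile l x j"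
  shows "profile l x (Suc j) \<le> profile l x j"
proof -
  let ?p = "profile l x j"
  have "?p \<le> 1" using profile_bounds assms(1-4) by blast
  have "l * (?p\<^sup>2 - x\<^sup>2) \<le> l * ?p\<^sup>2"
    using assms by (intro mult_left_mono) auto
  also have "\<dots> \<le> ?p\<^sup>2"
    using assms by (intro mult_left_le_one_le) auto
  also have "\<dots> \<le> ?p"
    using \<open>?p \<le> 1\<close> assms(5) by (simp add: power2_eq_square mult_left_le)
  finally show ?thesis by simp
qed

lemma profile_stays_below:
  fixes l x :: real
  assumes "0 \<le> l" "l \<le> 1" "0 \<le> x" "x \<le> 1" "j \<le> m" "profile l x j < x"
  shows "profile l x m < x"
  using \<open>j \<le> m\<close>
proof (induction m rule: dec_induct)
  case base
  then show ?case using assms by simp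
next
  case (step m)
  let ?p = "profile l x m"
  have "- x \<le> ?p" using profile_bounds assms(1-4) by blast
  then have "?p\<^sup>2 \<le> x\<^sup>2" and "0 < x"
    using step.IH by (auto simp: abs_le_square_iff[symmetric])
  then have "profile l x (Suc m) \<le> 0"
    using assms by (simp add: mult_nonneg_nonpos)
  with \<open>0 < x\<close> show ?case by simp
qed

lemma profile_strict_antimono:
  assumes "0 < l" "0 \<le> x" "x < y" "1 \<le> m" "\<And>j. j < m \<Longrightarrow> 0 \<le> profile l y j"
  shows "profile l y m < profile l x m"
  using \<open>1 \<le> m\<close>
proof (induction m rule: dec_induct)
  case base
  have "x\<^sup>2 < y\<^sup>2" using assms by (simp add: power_strict_mono)
  then show ?case using \<open>0 < l\<close> by simp
next
  case (step m)
  have "0 \<le> profile l y m" using assms(5) step.hyps(2) .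
  then have "(profile l y m)\<^sup>2 < (profile l x m)\<^sup>2"
    using step.IH by (simp add: power_strict_mono)
  moreover have "x\<^sup>2 < y\<^sup>2" using assms by (simp add: power_strict_mono)
  ultimately show ?case using \<open>0 < l\<close> by simp
qed

lemma profile_doubly_exponential_decay:
  fixes l x :: real
  assumes "0 \<le> l" "\<forall>j<m. 0 \<le> profile l x j"
  shows "l * profile l x m \<le> l ^ 2 ^ m"
  using assms(2)
proof (induction m)
  case 0
  then show ?case by simp
next
  case (Suc m)
  have "l * profile l x (Suc m) = l * l * ((profile l x m)\<^sup>2 - x\<^sup>2)" by simp
  also have "\<dots> \<le> l * l * (profile l x m)\<^sup>2"
    using \<open>0 \<le> l\<close> by (intro mult_left_mono) auto
  also have "\<dots> = (l * profile l x m)\<^sup>2"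
    by (simp add: power_mult_distrib power2_eq_square)
  also have "\<dots> \<le> (l ^ 2 ^ m)\<^sup>2"
    using Suc \<open>0 \<le> l\<close> by (intro power_mono) auto
  also have "\<dots> = l ^ 2 ^ Suc m"
    by (simp only: power_mult[symmetric] power_Suc2)
  finally show ?case .
qed

lemma equilibrium_iff_recurrence:
  fixes s :: "nat \<Rightarrow> real"
  assumes "s (Suc b) = 0"
  shows "(\<forall>k\<in>{1..b}. fmf l s k = 0) \<longleftrightarrow> (\<forall>k\<in>{1..b}. s k = l * ((s (k - 1))\<^sup>2 - (s b)\<^sup>2))"
proof -
  define F where "F k = l * (s (k - 1))\<^sup>2 - s k" for k
  have fmf: "fmf l s k = F k - F (Suc k)" for k
    unfolding fmf_def F_def by (simp add: algebra_simps)
  have "(\<forall>k\<in>{1..b}. fmf l s k = 0) \<longleftrightarrow> (\<forall>k\<in>{1..b}. F k = F (Suc b))"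
  proof
    assume eq: "\<forall>k\<in>{1..b}. fmf l s k = 0"
    show "\<forall>k\<in>{1..b}. F k = F (Suc b)"
    proof
      fix k assume k: "k \<in> {1..b}"
      then have "F k - F (Suc b) = (\<Sum>j=k..b. fmf l s j)"
        using sum_Suc_diff[of k b "\<lambda>j. - F j"] by (simp add: fmf)
      also have "\<dots> = 0"
        using eq k by (intro sum.neutral) auto
      finally show "F k = F (Suc b)" by simp
    qed
  next
    assume F: "\<forall>k\<in>{1..b}. F k = F (Suc b)"
    show "\<forall>k\<in>{1..b}. fmf l s k = 0"
    proof
      fix k assume k: "k \<in> {1..b}"
      have "F (Suc k) = F (Suc b)"
        using F k by (cases "k = b") auto
      then show "fmf l s k = 0"
        using F k by (simp add: fmf)
    qed
  qed
  moreover have "F k = F (Suc b) \<longleftrightarrow> s k = l * ((s (k - 1))\<^sup>2 - (s b)\<^sup>2)" for k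
    unfolding F_def using assms by (auto simp: algebra_simps)
  ultimately show ?thesis by simp
qed

lemma equilibrium_eq_profile:
  assumes "admissible b s" "\<forall>k\<in>{1..b}. fmf l s k = 0" "j \<le> b"
  shows "s j = profile l (s b) j"
  using \<open>j \<le> b\<close>
proof (induction j)
  case 0
  then show ?case using assms(1) by (simp add: admissible_def)
next
  case (Suc j)
  have "s (Suc b) = 0" using assms(1) by (simp add: admissible_def)
  then have "\<forall>k\<in>{1..b}. s k = l * ((s (k - 1))\<^sup>2 - (s b)\<^sup>2)"
    using assms(2) equilibrium_iff_recurrence by blast
  moreover have "Suc j \<in> {1..b}" using Suc.prems by simp
  ultimately have "s (Suc j) = l * ((s (Suc j - 1))\<^sup>2 - (s b)\<^sup>2)" by blast
  with Suc show ?case by simp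
qed

lemma equilibrium_exists:
  assumes "0 < l" "l \<le> 1"
  shows "\<exists>s. admissible b s \<and> (\<forall>k\<in>{1..b}. fmf l s k = 0)"
proof -
  have "profile l 1 b - 1 \<le> 0" "0 \<le> profile l 0 b - 0"
    using profile_bounds[of l 1 b] profile_bounds[of l 0 b] assms by auto
  then have "\<exists>x\<ge>0. x \<le> 1 \<and> profile l x b - x = 0"
    by (intro IVT2) (auto intro!: continuous_intros isCont_profile)
  then obtain x where x: "0 \<le> x" "x \<le> 1" "profile l x b = x"
    by auto
  define s where "s k = (if k \<le> b then profile l x k else 0)" for k
  \<comment> \<open>once below \<open>x\<close>, the orbit stays below \<open>x\<close>; but it ends at \<open>x\<close>\<close>
  have above: "x \<le> s k" if "k \<le> b" for k
    using profile_stays_below[of l x k b] assms x that by (force simp: s_def)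
  have "admissible b s"
    unfolding admissible_def
  proof (intro conjI allI impI ballI)
    fix k assume k: "k \<in> {1..b}"
    then show "0 \<le> s k"
      using above[of k] x by simp
    from k obtain j where j: "k = Suc j" "j < b" by (cases k) auto
    then have "x \<le> profile l x j"
      using above[of j] by (simp add: s_def)
    then have "profile l x (Suc j) \<le> profile l x j"
      using assms x by (intro profile_decreasing) auto
    then show "s k \<le> s (k - 1)"
      using j by (simp add: s_def)
  qed (simp_all add: s_def)
  moreover have "\<forall>k\<in>{1..b}. fmf l s k = 0"
  proof (subst equilibrium_iff_recurrence)
    show "s (Suc b) = 0" by (simp add: s_def)
    show "\<forall>k\<in>{1..b}. s k = l * ((s (k - 1))\<^sup>2 - (s b)\<^sup>2)"
    proof
      fix k assume "k \<in> {1..b}"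
      then obtain j where "k = Suc j" "j < b" by (cases k) auto
      then show "s k = l * ((s (k - 1))\<^sup>2 - (s b)\<^sup>2)"
        using x by (simp add: s_def)
    qed
  qed
  ultimately show ?thesis by blast
qed

lemma equilibrium_unique:
  assumes "0 < l"
    and "admissible b s" "\<forall>k\<in>{1..b}. fmf l s k = 0"
    and "admissible b t" "\<forall>k\<in>{1..b}. fmf l t k = 0"
  shows "s = t"
proof -
  have not_less: "\<not> u b < v b"
    if u: "admissible b u" "\<forall>k\<in>{1..b}. fmf l u k = 0"
      and v: "admissible b v" "\<forall>k\<in>{1..b}. fmf l v k = 0" for u v
  proof
    assume less: "u b < v b"
    have "u 0 = 1" "v 0 = 1"
      using u(1) v(1) by (simp_all add: admissible_def)
    have "1 \<le> b"
    proof (rule ccontr)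
      assume "\<not> 1 \<le> b"
      then have "b = 0" by simp
      with less \<open>u 0 = 1\<close> \<open>v 0 = 1\<close> show False by simp
    qed
    have "0 \<le> profile l (v b) j" if "j < b" for j
      using admissible_nonneg[OF v(1), of j] equilibrium_eq_profile[OF v, of j] that by simp
    then have "profile l (v b) b < profile l (u b) b"
      by (rule profile_strict_antimono[OF \<open>0 < l\<close> admissible_nonneg[OF u(1) order_refl] less \<open>1 \<le> b\<close>])
    then show False
      using equilibrium_eq_profile[OF u order_refl] equilibrium_eq_profile[OF v order_refl] less
      by linarith
  qed
  then have "s b = t b"
    using assms by (meson linorder_neqE_linordered_idom)
  show "s = t"
  proof
    fix j
    show "s j = t j"
    proof (cases "j \<le> b")
      case True
      have "s j = profile l (s b) j" by (rule equilibrium_eq_profile[OF assms(2,3) True])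
      also have "\<dots> = t j" unfolding \<open>s b = t b\<close> by (rule equilibrium_eq_profile[OF assms(4,5) True, symmetric])
      finally show ?thesis .
    next
      case False
      then show ?thesis using assms(2,4) by (simp add: admissible_def)
    qed
  qed
qed

lemma sstar_equilibrium:
  assumes "0 < l" "l \<le> 1"
  shows "admissible b (sstar l b)" "\<forall>k\<in>{1..b}. fmf l (sstar l b) k = 0"
proof -
  have "\<exists>!s. admissible b s \<and> (\<forall>k\<in>{1..b}. fmf l s k = 0)"
    using equilibrium_exists[OF assms] equilibrium_unique[OF assms(1)] by blast
  then have "admissible b (sstar l b) \<and> (\<forall>k\<in>{1..b}. fmf l (sstar l b) k = 0)"
    unfolding sstar_def by (rule theI')
  then show "admissible b (sstar l b)" "\<forall>k\<in>{1..b}. fmf l (sstar l b) k = 0"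
    by auto
qed

lemma equilibrium_pos:
  assumes "0 < l" "admissible b s" "\<forall>k\<in>{1..b}. fmf l s k = 0" "k \<le> b"
  shows "0 < s k"
proof -
  have "0 \<le> s b" using admissible_nonneg[OF assms(2) order_refl] .
  moreover have "s b = profile l (s b) b"
    by (rule equilibrium_eq_profile[OF assms(2,3) order_refl])
  then have "s b \<noteq> 0"
    using profile_zero_pos[OF assms(1), of b] by (metis less_irrefl)
  ultimately show ?thesis
    using admissible_antimono[OF assms(2) \<open>k \<le> b\<close> order_refl] by simp
qed

section \<open>The inverse of the transposed Jacobian\<close>

definition zero_padded :: "real vec \<Rightarrow> nat \<Rightarrow> real" where
  "zero_padded v m = (if 1 \<le> m \<and> m \<le> dim_vec v then v $ (m - 1) else 0)"

lemma jac_transpose_mult_vec: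
  fixes v :: "real vec"
  assumes v: "v \<in> carrier_vec b" and k: "k \<in> {1..b}"
  shows "(transpose_mat (jac l b s) *\<^sub>v v) $ (k - 1)
    = zero_padded v (k - 1) - zero_padded v k + 2 * l * s k * (zero_padded v (k + 1) - zero_padded v k)"
proof -
  let ?A = "transpose_mat (jac l b s)"
  let ?X = "zero_padded v"
  obtain r where r: "k = Suc r" "r < b" using k by (cases k) auto
  have "(?A *\<^sub>v v) $ r = (\<Sum>c\<in>{0..<b}. ?A $$ (r, c) * v $ c)"
    using v r by (simp add: jac_def scalar_prod_def)
  also have "\<dots> = (\<Sum>c\<in>{0..<b}. (if c = r then (- 2 * l * s (r + 1) - 1) * v $ r else 0)
      + (if 1 \<le> r \<and> c = r - 1 then v $ (r - 1) else 0)
      + (if c = r + 1 then 2 * l * s (r + 1) * v $ (r + 1) else 0))"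
    using r by (intro sum.cong) (auto simp: jac_def)
  also have "\<dots> = (- 2 * l * s (r + 1) - 1) * v $ r
      + (if 1 \<le> r then v $ (r - 1) else 0)
      + (if r + 1 < b then 2 * l * s (r + 1) * v $ (r + 1) else 0)"
    using r by (auto simp: sum.distrib)
  also have "\<dots> = ?X r - ?X (r + 1) + 2 * l * s (r + 1) * (?X (r + 2) - ?X (r + 1))"
    using v r by (auto simp: zero_padded_def algebra_simps)
  finally show ?thesis
    using r by (simp add: numeral_2_eq_2)
qed

lemma jac_transpose_det_nonzero:
  assumes pos: "\<forall>k\<in>{1..b}. 0 < l * s k"
  shows "det (transpose_mat (jac l b s)) \<noteq> 0"
proof
  let ?A = "transpose_mat (jac l b s)"
  assume "det ?A = 0"
  moreover have "?A \<in> carrier_mat b b" by (simp add: jac_def)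
  ultimately obtain v where v: "v \<in> carrier_vec b" "v \<noteq> 0\<^sub>v b" "?A *\<^sub>v v = 0\<^sub>v b"
    using det_0_iff_vec_prod_zero by blast
  have "zero_padded v k = 0" if "k \<le> b" for k
  proof (rule difference_eq_homogeneous[where a = "\<lambda>k. 2 * l * s k" and n = b])
    show "\<forall>k\<in>{1..b}. 0 < 2 * l * s k" using pos by auto
    show "\<forall>k\<in>{1..b}. zero_padded v (k - 1) - zero_padded v k
        + 2 * l * s k * (zero_padded v (k + 1) - zero_padded v k) = 0"
    proof
      fix k assume k: "k \<in> {1..b}"
      then have "k - 1 < b" by auto
      with v(3) have "(?A *\<^sub>v v) $ (k - 1) = 0" by simp
      then show "zero_padded v (k - 1) - zero_padded v k
          + 2 * l * s k * (zero_padded v (k + 1) - zero_padded v k) = 0"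
        using jac_transpose_mult_vec[OF v(1) k] by simp
    qed
  qed (use v(1) that in \<open>auto simp: zero_padded_def\<close>)
  have "v = 0\<^sub>v b"
  proof (rule eq_vecI)
    fix j assume "j < dim_vec (0\<^sub>v b :: real vec)"
    then have "j < b" "zero_padded v (Suc j) = 0"
      using \<open>\<And>k. k \<le> b \<Longrightarrow> zero_padded v k = 0\<close> by auto
    then show "v $ j = 0\<^sub>v b $ j"
      using v(1) by (simp add: zero_padded_def)
  qed (use v(1) in simp)
  with v(2) show False ..
qed

lemma matinv_right_inverse:
  assumes A: "A \<in> carrier_mat n n" and "det A \<noteq> 0"
  shows "matinv A \<in> carrier_mat n n" "A * matinv A = 1\<^sub>m n"
proof -
  obtain B where B: "B \<in> carrier_mat n n" "A * B = 1\<^sub>m n" "B * A = 1\<^sub>m n"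
    using det_non_zero_imp_unit[OF assms] unfolding Units_def ring_mat_def by auto
  have "matinv A = B"
    unfolding matinv_def
  proof (rule the_equality)
    fix B' assume "B' \<in> carrier_mat (dim_row A) (dim_row A) \<and> A * B' = 1\<^sub>m (dim_row A) \<and> B' * A = 1\<^sub>m (dim_row A)"
    then have B': "B' \<in> carrier_mat n n" "B' * A = 1\<^sub>m n" using A by auto
    have "B' = B' * (A * B)" using B(2) B'(1) by simp
    also have "\<dots> = (B' * A) * B" using A B(1) B'(1) by (simp add: assoc_mult_mat)
    also have "\<dots> = B" using B(1) B'(2) by simp
    finally show "B' = B" .
  qed (use A B in simp)
  with B show "matinv A \<in> carrier_mat n n" "A * matinv A = 1\<^sub>m n" by simp_all
qed

lemma jac_transpose_inverse_diag_bounds: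
  assumes pos: "\<forall>k\<in>{1..b}. 0 < l * s k" and i: "1 \<le> i" "i \<le> b"
  shows "0 \<le> - matinv (transpose_mat (jac l b s)) $$ (i - 1, i - 1)"
    and "- matinv (transpose_mat (jac l b s)) $$ (i - 1, i - 1)
      \<le> (\<Sum>k<i. \<Prod>m\<in>{Suc k..i - 1}. 2 * l * s m)"
proof -
  let ?A = "transpose_mat (jac l b s)"
  define B where "B = matinv ?A"
  have A: "?A \<in> carrier_mat b b" by (simp add: jac_def)
  note B = matinv_right_inverse[OF A jac_transpose_det_nonzero[OF pos], folded B_def]
  define v where "v = col B (i - 1)"
  have v: "v \<in> carrier_vec b" using B(1) unfolding carrier_vec_def v_def by simp
  have "?A *\<^sub>v v = col (?A * B) (i - 1)"
    using A B(1) i by (simp add: v_def col_mult2)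
  also have "\<dots> = unit_vec b (i - 1)"
    using B(2) i by simp
  finally have Av: "?A *\<^sub>v v = unit_vec b (i - 1)" .
  have rows: "\<forall>k\<in>{1..b}. zero_padded v (k - 1) - zero_padded v k
      + 2 * l * s k * (zero_padded v (k + 1) - zero_padded v k) = (if k = i then 1 else 0)"
  proof
    fix k assume k: "k \<in> {1..b}"
    then show "zero_padded v (k - 1) - zero_padded v k
        + 2 * l * s k * (zero_padded v (k + 1) - zero_padded v k) = (if k = i then 1 else 0)"
      using jac_transpose_mult_vec[OF v k, of l s] Av i k by (auto simp: eq_diff_iff)
  qed
  have "zero_padded v i = B $$ (i - 1, i - 1)"
    using v B(1) i by (simp add: zero_padded_def v_def)
  moreover note difference_eq_solution_bounds[where a = "\<lambda>k. 2 * l * s k", OF _ rows _ _ i zero_le_one]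
  ultimately show "0 \<le> - matinv ?A $$ (i - 1, i - 1)"
    and "- matinv ?A $$ (i - 1, i - 1) \<le> (\<Sum>k<i. \<Prod>m\<in>{Suc k..i - 1}. 2 * l * s m)"
    using pos v by (auto simp: B_def zero_padded_def)
qed

lemma mult_power_le_inverse_one_minus:
  fixes l :: real
  assumes "0 \<le> l" "l < 1"
  shows "real t * l ^ t \<le> 1 / (1 - l)"
proof -
  have "real t * l ^ t = (\<Sum>k<t. l ^ t)" by simp
  also have "\<dots> \<le> (\<Sum>k<t. l ^ k)"
    using assms by (intro sum_mono power_decreasing) auto
  also have "\<dots> = (1 - l ^ t) / (1 - l)"
    using assms by (simp add: sum_gp_strict)
  also have "\<dots> \<le> 1 / (1 - l)"
    using assms by (intro divide_right_mono) auto
  finally show ?thesis .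
qed

lemma prod_le_inverse_one_minus:
  fixes a :: "nat \<Rightarrow> real"
  assumes l: "0 \<le> l" "l < 1" and "1 \<le> p"
    and a: "\<And>m. p \<le> m \<Longrightarrow> m \<le> q \<Longrightarrow> 0 \<le> a m \<and> a m \<le> 2 * l ^ 2 ^ m"
  shows "(\<Prod>m\<in>{p..q}. a m) \<le> 1 / (1 - l)"
proof (cases "p \<le> q")
  case False
  then have "(\<Prod>m\<in>{p..q}. a m) = 1" by simp
  also have "1 \<le> 1 / (1 - l)" using l by simp
  finally show ?thesis .
next
  case True
  have anonneg: "0 \<le> a m" if "p \<le> m" "m \<le> q" for m
    using a that by blast
  have "(\<Prod>m\<in>{p..q}. a m) = a q * (\<Prod>m\<in>{p..q - 1}. a m)"
  proof -
    have "{p..q} = insert q {p..q - 1}" "q \<notin> {p..q - 1}"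
      using True \<open>1 \<le> p\<close> by auto
    then show ?thesis by simp
  qed
  also have "\<dots> \<le> (2 * l ^ 2 ^ q) * 2 ^ (q - 1)"
  proof (intro mult_mono prod_le_power)
    fix m assume "m \<in> {p..q - 1}"
    then have "0 \<le> a m" "a m \<le> 2 * l ^ 2 ^ m" using a[of m] by auto
    moreover have "l ^ 2 ^ m \<le> 1" using l by (intro power_le_one) auto
    ultimately show "0 \<le> a m \<and> a m \<le> 2" by linarith
  qed (use a True l \<open>1 \<le> p\<close> in \<open>auto intro!: prod_nonneg anonneg\<close>)
  also have "\<dots> = real (2 ^ q) * l ^ 2 ^ q"
    using True \<open>1 \<le> p\<close> by (simp add: power_eq_if[of 2 q])
  also have "\<dots> \<le> 1 / (1 - l)"
    by (rule mult_power_le_inverse_one_minus[OF l])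
  finally show ?thesis .
qed

lemma sstar_inverse_diag_bound:
  assumes l: "0 < l" "l < 1" and i: "1 \<le> i" "i \<le> b"
  shows "- matinv (transpose_mat (jac l b (sstar l b))) $$ (i - 1, i - 1) \<le> real b / (1 - l)"
proof -
  let ?s = "sstar l b"
  note eq = sstar_equilibrium[of l b] l
  have pos: "0 < ?s k" if "k \<le> b" for k
    using equilibrium_pos[of l b ?s k] eq that by simp
  have a: "0 \<le> 2 * l * ?s m \<and> 2 * l * ?s m \<le> 2 * l ^ 2 ^ m" if "m \<le> b" for m
  proof -
    have "0 \<le> profile l (?s b) j" if "j < m" for j
      using pos[of j] equilibrium_eq_profile[of b ?s l j] eq that \<open>m \<le> b\<close> by simp
    then have "l * profile l (?s b) m \<le> l ^ 2 ^ m"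
      using l by (intro profile_doubly_exponential_decay) auto
    then show ?thesis
      using pos[OF that] equilibrium_eq_profile[of b ?s l m] eq that l by simp
  qed
  have "- matinv (transpose_mat (jac l b ?s)) $$ (i - 1, i - 1)
      \<le> (\<Sum>k<i. \<Prod>m\<in>{Suc k..i - 1}. 2 * l * ?s m)"
    using jac_transpose_inverse_diag_bounds(2) pos l i by simp
  also have "\<dots> \<le> (\<Sum>k<i. 1 / (1 - l))"
    using a l i by (intro sum_mono prod_le_inverse_one_minus) auto
  also have "\<dots> \<le> real b / (1 - l)"
    using l i by (simp add: divide_right_mono)
  finally show ?thesis .
qed

lemma sstar_weighted_ftil_sum_bound:
  assumes l: "0 < l" "l < 1"
  shows "- (\<Sum>i=1..b. matinv (transpose_mat (jac l b (sstar l b))) $$ (i - 1, i - 1)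
      * ftil l (sstar l b) i) \<le> real b / (1 - l)"
proof -
  let ?s = "sstar l b"
  let ?M = "matinv (transpose_mat (jac l b ?s))"
  have adm: "admissible b ?s" and eq: "\<forall>k\<in>{1..b}. fmf l ?s k = 0"
    using sstar_equilibrium l by auto
  have ftil: "ftil l ?s i = ?s i - ?s (i + 1)" if "i \<in> {1..b}" for i
    using eq that unfolding fmf_def ftil_def by auto
  have incr: "0 \<le> ?s i - ?s (i + 1)" if "i \<in> {1..b}" for i
  proof (cases "i = b")
    case True
    then show ?thesis using adm admissible_nonneg[OF adm, of b] by (simp add: admissible_def)
  next
    case False
    then show ?thesis using admissible_antimono[OF adm, of i "i + 1"] that by simp
  qed
  have "?s 1 - ?s (Suc b) \<le> 1"
    using adm admissible_antimono[OF adm, of 0 1] by (cases b) (auto simp: admissible_def)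
  have telescope: "(\<Sum>i=1..b. ?s i - ?s (i + 1)) = ?s 1 - ?s (Suc b)"
    using sum_Suc_diff[of 1 b "\<lambda>i. - ?s i"] by simp
  have "- (\<Sum>i=1..b. ?M $$ (i - 1, i - 1) * ftil l ?s i)
      = (\<Sum>i=1..b. - ?M $$ (i - 1, i - 1) * (?s i - ?s (i + 1)))"
    by (simp add: ftil sum_negf[symmetric])
  also have "\<dots> \<le> (\<Sum>i=1..b. real b / (1 - l) * (?s i - ?s (i + 1)))"
    using sstar_inverse_diag_bound[OF l] incr by (intro sum_mono mult_right_mono) auto
  also have "\<dots> = real b / (1 - l) * (?s 1 - ?s (Suc b))"
    unfolding telescope[symmetric] by (rule sum_distrib_left[symmetric])
  also have "\<dots> \<le> real b / (1 - l)"
    using \<open>?s 1 - ?s (Suc b) \<le> 1\<close> l by (intro mult_left_le) auto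
  finally show ?thesis .
qed

lemma lam_bounds:
  assumes "0 < \<gamma>" "\<gamma> \<le> 1" "0 < \<alpha>" "1 < N"
  shows "0 < lam \<gamma> \<alpha> N" "lam \<gamma> \<alpha> N < 1"
proof -
  have "1 < real N powr \<alpha>" using assms by (intro gr_one_powr) auto
  moreover have "0 < real N powr \<alpha>" using calculation by linarith
  ultimately have "\<gamma> / real N powr \<alpha> < 1" "0 < \<gamma> / real N powr \<alpha>"
    using assms(1,2) by simp_all
  then show "0 < lam \<gamma> \<alpha> N" "lam \<gamma> \<alpha> N < 1" by (simp_all add: lam_def)
qed

lemma log_rate_bound:
  fixes N :: real
  assumes "1 < N" "0 < \<gamma>" "0 \<le> \<alpha>" "0 < \<xi>" "0 \<le> K" "B \<le> K * ln N"
  shows "B * N powr \<alpha> / (\<gamma> * N) \<le> K / (\<xi> * \<gamma>) / N powr (1 - 2 * \<alpha> - 3 * \<xi>)"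
proof -
  have "ln N \<le> N powr \<xi> / \<xi>"
    using assms by (intro ln_powr_bound) auto
  then have "B \<le> K * (N powr \<xi> / \<xi>)"
    using assms(5,6) by (meson mult_left_mono order_trans)
  then have "B * N powr \<alpha> / (\<gamma> * N) \<le> K * (N powr \<xi> / \<xi>) * N powr \<alpha> / (\<gamma> * N)"
    using assms by (intro divide_right_mono mult_right_mono) auto
  also have "\<dots> = K / (\<xi> * \<gamma>) * N powr (\<xi> + \<alpha> - 1)"
    using assms by (simp add: powr_diff powr_add)
  also have "\<dots> \<le> K / (\<xi> * \<gamma>) * N powr (- (1 - 2 * \<alpha> - 3 * \<xi>))"
    using assms by (intro mult_left_mono powr_mono) auto
  also have "\<dots> = K / (\<xi> * \<gamma>) / N powr (1 - 2 * \<alpha> - 3 * \<xi>)"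
    by (subst powr_minus_divide) simp
  finally show ?thesis .
qed

lemma sstar_weighted_ftil_sum_rate:
  assumes "0 < \<gamma>" "\<gamma> \<le> 1" "0 < \<alpha>" "0 < \<xi>" "2 \<le> N" "0 \<le> K" "real b \<le> K * ln (real N)"
  shows "- (1 / real N) * (\<Sum>i=1..b.
      matinv (transpose_mat (jac (lam \<gamma> \<alpha> N) b (sstar (lam \<gamma> \<alpha> N) b))) $$ (i - 1, i - 1)
      * ftil (lam \<gamma> \<alpha> N) (sstar (lam \<gamma> \<alpha> N) b) i)
    \<le> K / (\<xi> * \<gamma>) / real N powr (1 - 2 * \<alpha> - 3 * \<xi>)"
    (is "- (1 / real N) * ?sum \<le> _")
proof -
  let ?l = "lam \<gamma> \<alpha> N"
  have l: "0 < ?l" "?l < 1" using lam_bounds assms(1-5) by auto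
  have "- (1 / real N) * ?sum = (1 / real N) * - ?sum" by simp
  also have "\<dots> \<le> (1 / real N) * (real b / (1 - ?l))"
    using sstar_weighted_ftil_sum_bound[OF l] by (intro mult_left_mono) auto
  also have "\<dots> = real b * real N powr \<alpha> / (\<gamma> * real N)"
    using assms(1) by (simp add: lam_def)
  also have "\<dots> \<le> K / (\<xi> * \<gamma>) / real N powr (1 - 2 * \<alpha> - 3 * \<xi>)"
    using assms by (intro log_rate_bound) auto
  finally show ?thesis .
qed

theorem lemma11:
  fixes \<gamma> \<alpha> \<xi> :: real and b :: "nat \<Rightarrow> nat"
  assumes "0 < \<gamma>" and "\<gamma> \<le> 1"
    and "0 < \<alpha>" and "\<alpha> < 1/4"
    and "0 < \<xi>"
    and "\<forall>N\<ge>1. b N \<ge> 1"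
    and "(\<lambda>N. real (b N)) \<in> O(\<lambda>N. ln (real N))"
  shows "\<exists>C>0. \<exists>N0. \<forall>N\<ge>N0.
     - (1 / real N) * (\<Sum>i=1..b N.
         (matinv (transpose_mat (jac (lam \<gamma> \<alpha> N) (b N) (sstar (lam \<gamma> \<alpha> N) (b N)))))
            $$ (i - 1, i - 1)
         * ftil (lam \<gamma> \<alpha> N) (sstar (lam \<gamma> \<alpha> N) (b N)) i)
     \<le> C / (real N) powr (1 - 2 * \<alpha> - 3 * \<xi>)"
proof -
  obtain K where "0 < K" and "\<forall>\<^sub>F N in at_top. norm (real (b N)) \<le> K * norm (ln (real N))"
    using assms(7) by (elim landau_o.bigE)
  then obtain N1 where N1: "\<And>N. N1 \<le> N \<Longrightarrow> real (b N) \<le> K * \<bar>ln (real N)\<bar>"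
    unfolding eventually_at_top_linorder by auto
  have "2 \<le> N \<and> real (b N) \<le> K * ln (real N)" if "max N1 2 \<le> N" for N
    using N1[of N] that by auto
  then show ?thesis
    using \<open>0 < K\<close> assms(1-3,5)
    by (intro exI[of _ "K / (\<xi> * \<gamma>)"] exI[of _ "max N1 2"] conjI allI impI
        sstar_weighted_ftil_sum_rate) auto
qed

end
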